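(* $M_{RC}^\mathcal{K}=(\Pi,\sigma,\gamma)$ is a model of $\mathcal{K}$.
   Context: DRSL setting: a ranked standpoint structure $M=(\Pi,\sigma,\gamma)$ has a nonempty set $\Pi$ of precisifications, $\sigma$ mapping each standpoint symbol to a nonempty subset of $\Pi$ with $\sigma( * )=\Pi$, and $\gamma$ mapping each precisification to a ranked interpretation (a convex function from classical valuations to $\mathds{N}\cup\{\infty\}$); $M,\pi\Vdash\phi$ iff $\gamma(\pi)\Vdash\phi$ for a propositional KLM formula $\phi$ ($\phi::=\alpha\mid\alpha\mathrel{|}\!\sim\beta\mid\phi\wedge\phi$), $M,\pi\Vdash\Box_s\psi$ (resp. $\Diamond_s\psi$) iff $\psi$ holds at all (resp. some) $\pi'\in\sigma(s)$, and $M\Vdash\psi$ iff it holds at every $\pi$; $M$ is a model of $\mathcal{K}$ if it satisfies every formula of $\mathcal{K}$. Let $\mathcal{K}$ be a DRSL knowledge base in normal form (formulas $\#_s\phi$, $\#\in\{\Box,\Diamond\}$, $\phi$ a KLM formula, plus sharpening statements $s_1\preceq s_2$), $S$ its set of standpoints, and $\preceq^+$ the reflexive-transitive closure of its sharpening statements (with $s\preceq^+*$). Define $K_s=\{\phi\mid\Box_t\phi\in\mathcal{K}, s\preceq^+t\}$ and $K_s^\phi=K_s\cup\{\phi\}$ for $\Diamond_s\phi\in\mathcal{K}$. For a propositional KLM knowledge base $K$, $R^K_{RC}$ is its rational closure ranked model (the minimum ranked model of $K$ under the pointwise order). Then $M_{RC}^\mathcal{K}$ has $\Pi=\{\pi_s\mid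 s\in S-\{*\}\}\cup\{\pi_s^\phi\mid\Diamond_s\phi\in\mathcal{K}\}$, $\sigma(s)=\{\pi_t\mid t\preceq^+s\}\cup\{\pi_t^\phi\mid t\preceq^+s\}$, $\gamma(\pi_s)=R^{K_s}_{RC}$, $\gamma(\pi_s^\phi)=R^{K_s^\phi}_{RC}$. *)

theory Defs
  imports Main "HOL-Library.Extended_Nat"
begin

datatype 'a pform = PAtom 'a | PTop | PBot | PNeg "'a pform"
  | PAnd "'a pform" "'a pform" | POr "'a pform" "'a pform" | PImp "'a pform" "'a pform"

type_synonym 'a valuation = "'a \<Rightarrow> bool"

fun holds :: "'a valuation \<Rightarrow> 'a pform \<Rightarrow> bool" where
  "holds u (PAtom p) = u p"
| "holds u PTop = True"
| "holds u PBot = False"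
| "holds u (PNeg a) = (\<not> holds u a)"
| "holds u (PAnd a b) = (holds u a \<and> holds u b)"
| "holds u (POr a b) = (holds u a \<or> holds u b)"
| "holds u (PImp a b) = (holds u a \<longrightarrow> holds u b)"

type_synonym 'a ranked = "'a valuation \<Rightarrow> enat"

definition ranked_interp :: "'a ranked \<Rightarrow> bool" where
  "ranked_interp R \<longleftrightarrow> (\<forall>u i. R u = enat i \<longrightarrow> (\<forall>j<i. \<exists>v. R v = enat j))"

datatype 'a klm = KProp "'a pform" | KCond "'a pform" "'a pform" | KConj "'a klm" "'a klm"

definition min_worlds :: "'a ranked \<Rightarrow> 'a pform \<Rightarrow> 'a valuation set" where
  "min_worlds R a = {u. R u < \<infinity> \<and> holds u a \<and>
       (\<forall>v. R v < \<infinity> \<and> holds v a \<longrightarrow> R u \<le> R v)}"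

fun rsat :: "'a ranked \<Rightarrow> 'a klm \<Rightarrow> bool" where
  "rsat R (KProp a) = (\<forall>u. R u < \<infinity> \<longrightarrow> holds u a)"
| "rsat R (KCond a b) = (\<forall>u\<in>min_worlds R a. holds u b)"
| "rsat R (KConj f g) = (rsat R f \<and> rsat R g)"

definition ranked_model :: "'a klm set \<Rightarrow> 'a ranked \<Rightarrow> bool" where
  "ranked_model K R \<longleftrightarrow> ranked_interp R \<and> (\<forall>f\<in>K. rsat R f)"

definition rc_model :: "'a klm set \<Rightarrow> 'a ranked" where
  "rc_model K = (THE R. ranked_model K R \<and> (\<forall>R'. ranked_model K R' \<longrightarrow> (\<forall>u. R u \<le> R' u)))"

datatype 's stp = Star | Sp 's

text \<open>Normal-form DRSL statements: box/diamond of a KLM formula, and sharpenings s1 \<preceq> s2.\<close>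
datatype ('a, 's) nf = NBox "'s stp" "'a klm" | NDia "'s stp" "'a klm" | Sharpen "'s stp" "'s stp"

record ('a, 's, 'p) rss =
  Prec :: "'p set"
  Sig :: "'s stp \<Rightarrow> 'p set"
  Gam :: "'p \<Rightarrow> 'a ranked"

definition rss_wf :: "'s stp set \<Rightarrow> ('a, 's, 'p) rss \<Rightarrow> bool" where
  "rss_wf S M \<longleftrightarrow> Prec M \<noteq> {} \<and> (\<forall>s\<in>S. Sig M s \<noteq> {} \<and> Sig M s \<subseteq> Prec M)
     \<and> Sig M Star = Prec M \<and> (\<forall>p\<in>Prec M. ranked_interp (Gam M p))"

fun nf_holds :: "('a, 's, 'p) rss \<Rightarrow> ('a, 's) nf \<Rightarrow> bool" where
  "nf_holds M (NBox s f) = (\<forall>p\<in>Prec M. \<forall>q\<in>Sig M s. rsat (Gam M q) f)"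
| "nf_holds M (NDia s f) = (\<forall>p\<in>Prec M. \<exists>q\<in>Sig M s. rsat (Gam M q) f)"
| "nf_holds M (Sharpen s t) = (Sig M s \<subseteq> Sig M t)"

definition is_model :: "'s stp set \<Rightarrow> ('a, 's, 'p) rss \<Rightarrow> ('a, 's) nf set \<Rightarrow> bool" where
  "is_model S M K \<longleftrightarrow> rss_wf S M \<and> (\<forall>\<psi>\<in>K. nf_holds M \<psi>)"

fun nf_stps :: "('a, 's) nf \<Rightarrow> 's stp set" where
  "nf_stps (NBox s f) = {s}"
| "nf_stps (NDia s f) = {s}"
| "nf_stps (Sharpen s t) = {s, t}"

definition kb_stps :: "('a, 's) nf set \<Rightarrow> 's stp set" where
  "kb_stps K = insert Star (\<Union> (nf_stps ` K))"

definition sharp_rel :: "('a, 's) nf set \<Rightarrow> ('s stp \<times> 's stp) set" where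
  "sharp_rel K = ({(s, t). Sharpen s t \<in> K} \<union> {(s, Star) | s. True})\<^sup>*"

definition Ks :: "('a, 's) nf set \<Rightarrow> 's stp \<Rightarrow> 'a klm set" where
  "Ks K s = {f. \<exists>t. NBox t f \<in> K \<and> (s, t) \<in> sharp_rel K}"

datatype ('a, 's) prec = PStd "'s stp" | PDia "'s stp" "'a klm"

definition M_RC :: "('a, 's) nf set \<Rightarrow> ('a, 's, ('a, 's) prec) rss" where
  "M_RC K = \<lparr> Prec = {PStd s | s. s \<in> kb_stps K - {Star}} \<union> {PDia s f | s f. NDia s f \<in> K},
     Sig = (\<lambda>s. {PStd t | t. t \<in> kb_stps K - {Star} \<and> (t, s) \<in> sharp_rel K}
               \<union> {PDia t f | t f. NDia t f \<in> K \<and> (t, s) \<in> sharp_rel K}),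
     Gam = (\<lambda>p. case p of PStd s \<Rightarrow> rc_model (Ks K s)
                        | PDia s f \<Rightarrow> rc_model (insert f (Ks K s))) \<rparr>"

end

theory Submission
  imports Defs
begin

text \<open>Every KLM knowledge base has a minimum ranked model, even an inconsistent one (the ranking
  that is \<open>\<infinity>\<close> everywhere is a model). It is obtained by stacking layers: a valuation enters
  layer \<open>n + 1\<close> as soon as it violates no formula of the base once the layers below it are the
  more preferred worlds, and its rank is the first layer it enters. Hence every \<open>\<gamma>(\<pi>)\<close> of
  \<open>M_RC\<close> is a ranked model of its base; \<open>\<pi>\<^sub>s\<close> and \<open>\<pi>\<^sub>s\<^sup>\<phi>\<close> lie in \<open>\<sigma>(t)\<close> exactly when
  \<open>s \<preceq>\<^sup>+ t\<close>, so their bases contain every \<open>\<phi>\<close> with \<open>\<box>\<^sub>t\<phi>\<close> in the knowledge base,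
  \<open>\<pi>\<^sub>s\<^sup>\<phi>\<close> witnesses \<open>\<diamond>\<^sub>s\<phi>\<close>, and sharpenings hold by transitivity of \<open>\<preceq>\<^sup>+\<close>.\<close>

fun admissible :: "'a klm \<Rightarrow> 'a valuation set \<Rightarrow> 'a valuation \<Rightarrow> bool" where
  "admissible (KProp a) S u = holds u a"
| "admissible (KCond a b) S u = (holds u a \<and> \<not> holds u b \<longrightarrow> (\<exists>v\<in>S. holds v a))"
| "admissible (KConj f g) S u = (admissible f S u \<and> admissible g S u)"

lemma admissible_mono: "admissible f S u \<Longrightarrow> S \<subseteq> S' \<Longrightarrow> admissible f S' u"
  by (induction f) auto

lemma rsat_iff_admissible:
  "rsat R f \<longleftrightarrow> (\<forall>u. R u < \<infinity> \<longrightarrow> admissible f {v. R v < R u} u)"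
proof (induction f)
  case (KCond a b)
  show ?case
  proof
    assume sat: "rsat R (KCond a b)"
    show "\<forall>u. R u < \<infinity> \<longrightarrow> admissible (KCond a b) {v. R v < R u} u"
    proof (intro allI impI)
      fix u assume "R u < \<infinity>"
      show "admissible (KCond a b) {v. R v < R u} u"
      proof (cases "u \<in> min_worlds R a")
        case True
        with sat show ?thesis by simp
      next
        case False
        with \<open>R u < \<infinity>\<close> show ?thesis by (auto simp: min_worlds_def not_le)
      qed
    qed
  next
    assume adm: "\<forall>u. R u < \<infinity> \<longrightarrow> admissible (KCond a b) {v. R v < R u} u"
    show "rsat R (KCond a b)"
    proof (simp, intro ballI)
      fix u assume u: "u \<in> min_worlds R a"
      show "holds u b"
      proof (rule ccontr)
        assume "\<not> holds u b"
        then obtain v where v: "R v < R u" "holds v a"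
          using adm u by (auto simp: min_worlds_def)
        have "R u < \<infinity>" using u by (simp add: min_worlds_def)
        with v(1) have "R v < \<infinity>" by (rule order.strict_trans)
        with u v(2) have "R u \<le> R v" by (simp add: min_worlds_def)
        with v(1) show False by simp
      qed
    qed
  qed
qed auto

fun layer :: "'a klm set \<Rightarrow> nat \<Rightarrow> 'a valuation set" where
  "layer K 0 = {}"
| "layer K (Suc n) = layer K n \<union> {u. \<forall>f\<in>K. admissible f (layer K n) u}"

lemma layer_mono: "m \<le> n \<Longrightarrow> layer K m \<subseteq> layer K n"
  by (induction n) (auto simp: le_Suc_eq)

declare layer.simps(2) [simp del]

lemma layer_stable:
  assumes "layer K (Suc j) = layer K j" and "j \<le> n"
  shows "layer K n = layer K j"
  using assms(2)
proof (induction n)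
  case (Suc n)
  show ?case
  proof (cases "j = Suc n")
    case False
    with Suc have "layer K n = layer K j" by simp
    then have "layer K (Suc n) = layer K (Suc j)" by (simp only: layer.simps)
    with assms(1) show ?thesis by simp
  qed simp
qed simp

definition rc_rank :: "'a klm set \<Rightarrow> 'a ranked" where
  "rc_rank K u = (if \<exists>n. u \<in> layer K n then enat (LEAST n. u \<in> layer K (Suc n)) else \<infinity>)"

lemma layer_iff_rc_rank_less: "u \<in> layer K n \<longleftrightarrow> rc_rank K u < enat n"
proof
  assume u: "u \<in> layer K n"
  then obtain m where n: "n = Suc m" by (cases n) auto
  with u have "(LEAST k. u \<in> layer K (Suc k)) \<le> m" by (intro Least_le) simp
  moreover have "\<exists>n. u \<in> layer K n" using u by blast
  ultimately show "rc_rank K u < enat n"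
    unfolding rc_rank_def n by simp
next
  assume "rc_rank K u < enat n"
  then obtain k where k: "rc_rank K u = enat k" "k < n" by (cases "rc_rank K u") auto
  then obtain m where "u \<in> layer K m" and k_Least: "k = (LEAST k. u \<in> layer K (Suc k))"
    unfolding rc_rank_def by (auto split: if_splits)
  then have "\<exists>k. u \<in> layer K (Suc k)" using layer_mono[of m "Suc m" K] by auto
  then have "u \<in> layer K (Suc k)" unfolding k_Least by (rule LeastI_ex)
  with k show "u \<in> layer K n" using layer_mono[of "Suc k" n K] by auto
qed

lemma rc_rank_eq_iff: "rc_rank K u = enat n \<longleftrightarrow> u \<in> layer K (Suc n) - layer K n"
proof -
  have "rc_rank K u = enat n \<longleftrightarrow> rc_rank K u < enat (Suc n) \<and> \<not> rc_rank K u < enat n"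
    by (cases "rc_rank K u") auto
  then show ?thesis by (simp only: Diff_iff layer_iff_rc_rank_less)
qed

lemma ranked_interp_rc_rank: "ranked_interp (rc_rank K)"
  unfolding ranked_interp_def
proof (intro allI impI)
  fix u i j assume "rc_rank K u = enat i" and "j < i"
  have "layer K (Suc j) \<noteq> layer K j"
  proof
    assume stable: "layer K (Suc j) = layer K j"
    have "layer K (Suc i) = layer K j" "layer K i = layer K j"
      using \<open>j < i\<close> by (intro layer_stable[OF stable]; simp)+
    moreover have "u \<in> layer K (Suc i) - layer K i"
      using \<open>rc_rank K u = enat i\<close> by (simp only: rc_rank_eq_iff)
    ultimately show False by simp
  qed
  then obtain v where "v \<in> layer K (Suc j) - layer K j"
    using layer_mono[of j "Suc j" K] by auto
  then show "\<exists>v. rc_rank K v = enat j" by (auto simp: rc_rank_eq_iff)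
qed

lemma ranked_model_rc_rank: "ranked_model K (rc_rank K)"
  unfolding ranked_model_def
proof (intro conjI ranked_interp_rc_rank ballI)
  fix f assume "f \<in> K"
  show "rsat (rc_rank K) f" unfolding rsat_iff_admissible
  proof (intro allI impI)
    fix u assume "rc_rank K u < \<infinity>"
    then obtain k where k: "rc_rank K u = enat k" by (cases "rc_rank K u") auto
    then have "admissible f (layer K k) u"
      using \<open>f \<in> K\<close> unfolding rc_rank_eq_iff by (auto simp: layer.simps(2))
    moreover have "{v. rc_rank K v < rc_rank K u} = layer K k"
      unfolding k by (auto simp: layer_iff_rc_rank_less)
    ultimately show "admissible f {v. rc_rank K v < rc_rank K u} u" by simp
  qed
qed

lemma ranked_model_rank_in_layer:
  assumes "ranked_model K R" and "R u = enat n"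
  shows "u \<in> layer K (Suc n)"
  using assms(2)
proof (induction n arbitrary: u rule: less_induct)
  case (less n)
  have "{v. R v < R u} \<subseteq> layer K n"
  proof
    fix v assume "v \<in> {v. R v < R u}"
    then obtain m where "R v = enat m" "m < n" using less.prems by (cases "R v") auto
    then have "v \<in> layer K (Suc m)" using less.IH by blast
    with \<open>m < n\<close> show "v \<in> layer K n" using layer_mono[of "Suc m" n K] by auto
  qed
  moreover have "admissible f {v. R v < R u} u" if "f \<in> K" for f
  proof -
    have "R u < \<infinity>" using less.prems by simp
    with assms(1) that show ?thesis unfolding ranked_model_def rsat_iff_admissible by blast
  qed
  ultimately show ?case by (auto simp: layer.simps(2) intro: admissible_mono)
qed

lemma rc_rank_le_ranked_model:
  assumes "ranked_model K R"
  shows "rc_rank K u \<le> R u"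
proof (cases "R u")
  case (enat n)
  then have "rc_rank K u < enat (Suc n)"
    using ranked_model_rank_in_layer[OF assms] layer_iff_rc_rank_less by blast
  with enat show ?thesis by (cases "rc_rank K u") auto
qed simp

lemma rc_model_eq_rc_rank: "rc_model K = rc_rank K"
  unfolding rc_model_def
proof (rule the_equality)
  show "ranked_model K (rc_rank K) \<and> (\<forall>R'. ranked_model K R' \<longrightarrow> (\<forall>u. rc_rank K u \<le> R' u))"
    using ranked_model_rc_rank rc_rank_le_ranked_model by blast
next
  fix R assume "ranked_model K R \<and> (\<forall>R'. ranked_model K R' \<longrightarrow> (\<forall>u. R u \<le> R' u))"
  then show "R = rc_rank K"
    using ranked_model_rc_rank rc_rank_le_ranked_model by (blast intro: ext antisym)
qed

lemma ranked_interp_rc_model: "ranked_interp (rc_model K)"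
  using ranked_model_rc_rank[of K] by (simp add: rc_model_eq_rc_rank ranked_model_def)

lemma rsat_rc_model: "f \<in> K \<Longrightarrow> rsat (rc_model K) f"
  using ranked_model_rc_rank[of K] by (simp add: rc_model_eq_rc_rank ranked_model_def)

fun prec_stp :: "('a, 's) prec \<Rightarrow> 's stp" where
  "prec_stp (PStd s) = s"
| "prec_stp (PDia s f) = s"

lemma sharp_rel_refl: "(s, s) \<in> sharp_rel K"
  by (simp add: sharp_rel_def)

lemma sharp_rel_Star: "(s, Star) \<in> sharp_rel K"
  by (auto simp: sharp_rel_def)

lemma Sharpen_in_sharp_rel: "Sharpen s t \<in> K \<Longrightarrow> (s, t) \<in> sharp_rel K"
  by (auto simp: sharp_rel_def)

lemma sharp_rel_trans: "(r, s) \<in> sharp_rel K \<Longrightarrow> (s, t) \<in> sharp_rel K \<Longrightarrow> (r, t) \<in> sharp_rel K"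
  unfolding sharp_rel_def by (rule rtrancl_trans)

lemma Sig_M_RC_iff:
  "q \<in> Sig (M_RC K) s \<longleftrightarrow> q \<in> Prec (M_RC K) \<and> (prec_stp q, s) \<in> sharp_rel K"
  by (cases q) (auto simp: M_RC_def)

lemma Sig_M_RC_Star: "Sig (M_RC K) Star = Prec (M_RC K)"
  by (auto simp: Sig_M_RC_iff sharp_rel_Star)

lemma rsat_Gam_M_RC: "f \<in> Ks K (prec_stp q) \<Longrightarrow> rsat (Gam (M_RC K) q) f"
  by (cases q) (auto simp: M_RC_def rsat_rc_model)

lemma ranked_interp_Gam_M_RC: "ranked_interp (Gam (M_RC K) q)"
  by (cases q) (auto simp: M_RC_def ranked_interp_rc_model)

lemma rss_wf_M_RC:
  assumes "(\<exists>s\<in>kb_stps K. s \<noteq> Star) \<or> (\<exists>s f. NDia s f \<in> K)"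
  shows "rss_wf (kb_stps K) (M_RC K)"
proof -
  have "Prec (M_RC K) \<noteq> {}"
    using assms by (auto simp: M_RC_def)
  moreover have "Sig (M_RC K) s \<noteq> {}" if "s \<in> kb_stps K" for s
  proof (cases "s = Star")
    case False
    with that have "PStd s \<in> Sig (M_RC K) s" by (simp add: M_RC_def sharp_rel_refl)
    then show ?thesis by blast
  next
    case True
    with \<open>Prec (M_RC K) \<noteq> {}\<close> show ?thesis by (simp add: Sig_M_RC_Star)
  qed
  ultimately show ?thesis
    by (auto simp: rss_wf_def Sig_M_RC_iff Sig_M_RC_Star ranked_interp_Gam_M_RC)
qed

lemma nf_holds_M_RC:
  assumes "\<psi> \<in> K"
  shows "nf_holds (M_RC K) \<psi>"
proof (cases \<psi>)
  case (NBox s f)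
  have "f \<in> Ks K (prec_stp q)" if "q \<in> Sig (M_RC K) s" for q
    using that assms NBox by (auto simp: Ks_def Sig_M_RC_iff)
  with NBox show ?thesis by (auto intro: rsat_Gam_M_RC)
next
  case (NDia s f)
  have "PDia s f \<in> Sig (M_RC K) s"
    using assms NDia by (simp add: M_RC_def sharp_rel_refl)
  moreover have "rsat (Gam (M_RC K) (PDia s f)) f"
    by (simp add: M_RC_def rsat_rc_model)
  ultimately show ?thesis using NDia by auto
next
  case (Sharpen s t)
  with assms have "(s, t) \<in> sharp_rel K" by (simp add: Sharpen_in_sharp_rel)
  with Sharpen show ?thesis by (auto simp: Sig_M_RC_iff intro: sharp_rel_trans)
qed

theorem lemma5:
  fixes K :: "('a::finite, 's) nf set"
  assumes "finite K"
    and "(\<exists>s\<in>kb_stps K. s \<noteq> Star) \<or> (\<exists>s f. NDia s f \<in> K)"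
  shows "is_model (kb_stps K) (M_RC K) K"
  using rss_wf_M_RC[OF assms(2)] nf_holds_M_RC by (auto simp: is_model_def)

end
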